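(* Let $M$ be an even positive integer, $m=\lceil\log_2M\rceil$, and let $h_0,\dots,h_{M-1}$ be the filter coefficients of a wavelet of order $M$, with $h:=\sum_{\ell=0}^{M-1}|h_\ell|$. Then: (i) an $m$-qubit unitary LINPREP with $\mathrm{LINPREP}|0^m\rangle=\sum_{\ell=0}^{M-1}h_\ell|\ell\rangle$ can be executed using $\mathcal{O}(M\log_2M)$ elementary gates and $\lceil\log_2M\rceil$ borrowed qubits; (ii) $m$-qubit unitaries PREP and UNPREP with $\mathrm{PREP}|0^m\rangle=\frac{1}{\sqrt h}\sum_{\ell=0}^{M-1}\sqrt{|h_\ell|}\,|\ell\rangle$ and $\mathrm{UNPREP}^\dagger|0^m\rangle=\frac{1}{\sqrt h}\sum_{\ell=0}^{M-1}\mathrm{sign}(h_\ell)\sqrt{|h_\ell|}\,|\ell\rangle$ can each be executed using $\mathcal{O}(M^{3/2})$ elementary gates and one ancilla qubit.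
   Context: Wavelet of order $M$: real filter coefficients $h_0,\dots,h_{M-1}$ with $\sum_\ell h_\ell=\sqrt2$ and $\sum_\ell h_\ell^2=1$ (coming from an orthonormal wavelet). Elementary gates include arbitrary single-qubit gates (rotations with classically precomputed angles) and CNOT. An ancilla qubit starts and ends in $|0\rangle$; a borrowed qubit may start in any state and is returned to its original state. *)

theory Defs
  imports Complex_Main "Jordan_Normal_Form.Matrix"
begin

text \<open>An n-qubit state is a complex vector of dimension 2^n; the computational
  basis state with index x has qubit j equal to bit j of x (x div 2^j mod 2).
  Operators are complex 2^n x 2^n matrices.\<close>

definition qbit :: "nat \<Rightarrow> nat \<Rightarrow> nat" where
  "qbit x j = x div 2 ^ j mod 2"

definition flip_bit :: "nat \<Rightarrow> nat \<Rightarrow> nat" where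
  "flip_bit t y = (if qbit y t = 0 then y + 2 ^ t else y - 2 ^ t)"

definition cadj :: "complex mat \<Rightarrow> complex mat" where
  "cadj A = mat (dim_col A) (dim_row A) (\<lambda>(i, j). cnj (A $$ (j, i)))"

definition unitary_mat :: "nat \<Rightarrow> complex mat \<Rightarrow> bool" where
  "unitary_mat d U \<longleftrightarrow> U \<in> carrier_mat d d \<and> cadj U * U = 1\<^sub>m d"

datatype gate = SQ "complex mat" nat | CNOT nat nat

fun valid_gate :: "nat \<Rightarrow> gate \<Rightarrow> bool" where
  "valid_gate n (SQ U i) \<longleftrightarrow> unitary_mat 2 U \<and> i < n"
| "valid_gate n (CNOT c t) \<longleftrightarrow> c < n \<and> t < n \<and> c \<noteq> t"

fun gate_mat :: "nat \<Rightarrow> gate \<Rightarrow> complex mat" where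
  "gate_mat n (SQ U i) = mat (2 ^ n) (2 ^ n) (\<lambda>(x, y).
      if (\<forall>j<n. j \<noteq> i \<longrightarrow> qbit x j = qbit y j) then U $$ (qbit x i, qbit y i) else 0)"
| "gate_mat n (CNOT c t) = mat (2 ^ n) (2 ^ n) (\<lambda>(x, y).
      if x = (if qbit y c = 1 then flip_bit t y else y) then 1 else 0)"

text \<open>A circuit is a list of gates, applied left to right (first gate first).\<close>
definition circuit_mat :: "nat \<Rightarrow> gate list \<Rightarrow> complex mat" where
  "circuit_mat n gs = foldl (\<lambda>A g. gate_mat n g * A) (1\<^sub>m (2 ^ n)) gs"

definition valid_circuit :: "nat \<Rightarrow> gate list \<Rightarrow> bool" where
  "valid_circuit n gs \<longleftrightarrow> (\<forall>g\<in>set gs. valid_gate n g)"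

text \<open>Circuit gs on m+k qubits (system = qubits 0..m-1, extra = qubits m..m+k-1)
  executes the m-qubit unitary U using k borrowed qubits: for every system basis
  state s and every basis state a of the borrowed register,
  gs |s>|a> = (U|s>)|a>  (hence, by linearity, for arbitrary states).\<close>
definition executes_borrowed :: "nat \<Rightarrow> nat \<Rightarrow> gate list \<Rightarrow> complex mat \<Rightarrow> bool" where
  "executes_borrowed m k gs U \<longleftrightarrow> valid_circuit (m + k) gs \<and>
     (\<forall>s<2 ^ m. \<forall>a<2 ^ k.
        circuit_mat (m + k) gs *\<^sub>v unit_vec (2 ^ (m + k)) (s + 2 ^ m * a)
        = vec (2 ^ (m + k)) (\<lambda>x. if x div 2 ^ m = a then U $$ (x mod 2 ^ m, s) else 0))"

text \<open>Same with k ancilla qubits, which start and end in |0>.\<close>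
definition executes_ancilla :: "nat \<Rightarrow> nat \<Rightarrow> gate list \<Rightarrow> complex mat \<Rightarrow> bool" where
  "executes_ancilla m k gs U \<longleftrightarrow> valid_circuit (m + k) gs \<and>
     (\<forall>s<2 ^ m.
        circuit_mat (m + k) gs *\<^sub>v unit_vec (2 ^ (m + k)) s
        = vec (2 ^ (m + k)) (\<lambda>x. if x div 2 ^ m = 0 then U $$ (x mod 2 ^ m, s) else 0))"

definition wavelet_filter :: "nat \<Rightarrow> (nat \<Rightarrow> real) \<Rightarrow> bool" where
  "wavelet_filter M h \<longleftrightarrow> (\<Sum>l<M. h l) = sqrt 2 \<and> (\<Sum>l<M. (h l)\<^sup>2) = 1"

definition padded_vec :: "nat \<Rightarrow> nat \<Rightarrow> (nat \<Rightarrow> complex) \<Rightarrow> complex vec" where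
  "padded_vec m M f = vec (2 ^ m) (\<lambda>l. if l < M then f l else 0)"

end

theory Submission
  imports Defs "Jordan_Normal_Form.Determinant" "HOL-Library.Log_Nat"
begin

text \<open>All three states have real amplitudes, and every real unit vector on m qubits can be
  prepared from the basis state 0 with fewer than 3 * 2^m gates by the method of Mottonen et al.:
  for t = m - 1, ..., 0 a uniformly controlled rotation on qubit t, controlled by the qubits above t,
  splits the weight of each block of 2^(t+1) basis states between its two halves, and the last stage
  also produces the signs. Since 2^m < 2M this costs O(M) gates, within both bounds claimed. The
  circuit touches only the m system qubits, so it runs unchanged with any number of borrowed or
  ancilla qubits, and UNPREP is the reversed adjoint of the circuit preparing the signed state.
  The wavelet conditions are only needed for the normalisations and for \<open>\<Sum>|h l| \<ge> \<Sum>h l = \<surd>2 > 0\<close>.\<close>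

definition set_qbit :: "nat \<Rightarrow> nat \<Rightarrow> nat \<Rightarrow> nat" where
  "set_qbit x i b = (if b = 0 then unset_bit i x else set_bit i x)"

lemma qbit_eq_bit: "qbit x j = of_bool (bit x j)"
  by (simp add: qbit_def bit_nat_def odd_iff_mod_2_eq_one)

lemma qbit_less_2: "qbit x j < 2"
  by (simp add: qbit_def)

lemma qbit_eqI: "(\<And>j. qbit x j = qbit y j) \<Longrightarrow> x = y"
  by (rule bit_eqI) (metis qbit_eq_bit of_bool_eq_iff)

lemma qbit_eq_0_if_less: "x < 2 ^ n \<Longrightarrow> n \<le> j \<Longrightarrow> qbit x j = 0"
  by (metis qbit_eq_bit bit_take_bit_iff of_bool_eq(1) not_le take_bit_nat_eq_self_iff)

lemma qbit_mod: "qbit (x mod 2 ^ m) j = (if j < m then qbit x j else 0)"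
  by (simp add: qbit_eq_bit flip: take_bit_eq_mod add: bit_take_bit_iff)

lemma qbit_div: "qbit (x div 2 ^ m) j = qbit x (m + j)"
  by (simp add: qbit_eq_bit flip: drop_bit_eq_div add: bit_drop_bit_eq)

lemma div_eq_qbit: "x div 2 ^ t = 2 * (x div 2 ^ Suc t) + qbit x t"
proof -
  have "x div 2 ^ Suc t = x div 2 ^ t div 2"
    by (simp only: power_Suc2 div_mult2_eq)
  then show ?thesis
    by (simp add: qbit_def)
qed

lemma mod_eq_0_iff_qbit: "x mod 2 ^ L = 0 \<longleftrightarrow> (\<forall>j<L. qbit x j = 0)"
  by (metis qbit_eqI qbit_mod div_0 mod_0 qbit_def)

lemma qbit_set_qbit: "b < 2 \<Longrightarrow> qbit (set_qbit x i b) j = (if j = i then b else qbit x j)"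
  by (auto simp: set_qbit_def qbit_eq_bit bit_simps)

lemma set_qbit_self: "set_qbit x i (qbit x i) = x"
  by (rule bit_eqI) (auto simp: set_qbit_def bit_simps qbit_eq_bit)

lemma set_qbit_set_qbit: "b' < 2 \<Longrightarrow> set_qbit (set_qbit x i b) i b' = set_qbit x i b'"
  by (auto simp: set_qbit_def bit_eq_iff bit_simps)

lemma set_qbit_div: "i < m \<Longrightarrow> b < 2 \<Longrightarrow> set_qbit x i b div 2 ^ m = x div 2 ^ m"
  by (rule qbit_eqI) (simp add: qbit_div qbit_set_qbit)

lemma set_qbit_mod: "i < m \<Longrightarrow> b < 2 \<Longrightarrow> set_qbit x i b mod 2 ^ m = set_qbit (x mod 2 ^ m) i b"
  by (rule qbit_eqI) (simp add: qbit_mod qbit_set_qbit)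

lemma set_qbit_less:
  assumes "x < 2 ^ n" "i < n" "b < 2"
  shows "set_qbit x i b < 2 ^ n"
proof -
  have "set_qbit x i b div 2 ^ n = 0"
    using assms by (simp add: set_qbit_div)
  then show ?thesis
    by (simp add: div_eq_0_iff)
qed

lemma flip_bit_eq_set_qbit: "flip_bit t y = set_qbit y t (1 - qbit y t)"
proof (cases "bit y t")
  case True
  have "set_bit t (unset_bit t y) = y"
    using True by (intro bit_eqI) (auto simp: bit_simps)
  moreover have "set_bit t (unset_bit t y) = unset_bit t y + 2 ^ t"
    by (simp add: set_bit_eq bit_simps)
  ultimately have "y - 2 ^ t = unset_bit t y"
    by simp
  then show ?thesis
    using True by (simp add: flip_bit_def set_qbit_def qbit_eq_bit)
qed (simp add: flip_bit_def set_qbit_def qbit_eq_bit set_bit_eq)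

section \<open>Gates and circuits as maps on amplitude functions\<close>

definition cnot_perm :: "nat \<Rightarrow> nat \<Rightarrow> nat \<Rightarrow> nat" where
  "cnot_perm c t x = (if qbit x c = 1 then flip_bit t x else x)"

lemma cnot_perm_eq_set_qbit: "qbit x c = 1 \<Longrightarrow> cnot_perm c t x = set_qbit x t (1 - qbit x t)"
  by (simp add: cnot_perm_def flip_bit_eq_set_qbit)

lemma cnot_perm_div: "t < m \<Longrightarrow> cnot_perm c t x div 2 ^ m = x div 2 ^ m"
  by (simp add: cnot_perm_def flip_bit_eq_set_qbit set_qbit_div)

lemma cnot_perm_mod: "c < m \<Longrightarrow> t < m \<Longrightarrow> cnot_perm c t x mod 2 ^ m = cnot_perm c t (x mod 2 ^ m)"
  by (simp add: cnot_perm_def flip_bit_eq_set_qbit set_qbit_mod qbit_mod)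

lemma cnot_perm_less: "x < 2 ^ n \<Longrightarrow> t < n \<Longrightarrow> cnot_perm c t x < 2 ^ n"
  by (simp add: cnot_perm_def flip_bit_eq_set_qbit set_qbit_less)

lemma cnot_perm_cnot_perm:
  assumes "c \<noteq> t"
  shows "cnot_perm c t (cnot_perm c t x) = x"
proof (cases "qbit x c = 1")
  case True
  have "qbit (cnot_perm c t x) c = 1"
    using True assms by (simp add: cnot_perm_eq_set_qbit qbit_set_qbit)
  then show ?thesis
    using True qbit_less_2[of x t]
    by (simp add: cnot_perm_eq_set_qbit qbit_set_qbit set_qbit_set_qbit set_qbit_self)
qed (simp add: cnot_perm_def)

lemma cnot_perm_eq_iff: "c \<noteq> t \<Longrightarrow> x = cnot_perm c t y \<longleftrightarrow> y = cnot_perm c t x"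
  by (metis cnot_perm_cnot_perm)

fun gate_fun :: "gate \<Rightarrow> (nat \<Rightarrow> complex) \<Rightarrow> nat \<Rightarrow> complex" where
  "gate_fun (SQ U i) f x = U $$ (qbit x i, 0) * f (set_qbit x i 0) + U $$ (qbit x i, 1) * f (set_qbit x i 1)"
| "gate_fun (CNOT c t) f x = f (cnot_perm c t x)"

definition circuit_fun :: "gate list \<Rightarrow> (nat \<Rightarrow> complex) \<Rightarrow> nat \<Rightarrow> complex" where
  "circuit_fun gs f = foldl (\<lambda>f g. gate_fun g f) f gs"

lemma circuit_fun_Nil [simp]: "circuit_fun [] f = f"
  and circuit_fun_Cons [simp]: "circuit_fun (g # gs) f = circuit_fun gs (gate_fun g f)"
  and circuit_fun_append [simp]: "circuit_fun (gs @ hs) f = circuit_fun hs (circuit_fun gs f)"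
  by (simp_all add: circuit_fun_def)

lemma valid_circuit_Nil [simp]: "valid_circuit n []"
  and valid_circuit_Cons [simp]: "valid_circuit n (g # gs) \<longleftrightarrow> valid_gate n g \<and> valid_circuit n gs"
  and valid_circuit_append [simp]: "valid_circuit n (gs @ hs) \<longleftrightarrow> valid_circuit n gs \<and> valid_circuit n hs"
  by (auto simp: valid_circuit_def)

lemma qbit_neighbours:
  assumes "x < 2 ^ n" "i < n"
  shows "{y. y < 2 ^ n \<and> (\<forall>j<n. j \<noteq> i \<longrightarrow> qbit x j = qbit y j)} = {set_qbit x i 0, set_qbit x i 1}"
proof (intro equalityI subsetI)
  fix y assume y: "y \<in> {y. y < 2 ^ n \<and> (\<forall>j<n. j \<noteq> i \<longrightarrow> qbit x j = qbit y j)}"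
  have "y = set_qbit x i (qbit y i)"
  proof (rule qbit_eqI)
    fix j
    show "qbit y j = qbit (set_qbit x i (qbit y i)) j"
      using y assms qbit_eq_0_if_less[of y n j] qbit_eq_0_if_less[of x n j]
      by (cases "j < n") (auto simp: qbit_set_qbit qbit_less_2)
  qed
  then show "y \<in> {set_qbit x i 0, set_qbit x i 1}"
    using qbit_less_2[of y i] by (auto simp: less_2_cases_iff)
qed (use assms in \<open>auto simp: qbit_set_qbit set_qbit_less\<close>)

lemma gate_mat_carrier: "gate_mat n g \<in> carrier_mat (2 ^ n) (2 ^ n)"
  by (cases g) auto

lemma gate_mat_mult_vec_index:
  assumes g: "valid_gate n g" and v: "v \<in> carrier_vec (2 ^ n)" and x: "x < 2 ^ n"
  shows "(gate_mat n g *\<^sub>v v) $ x = gate_fun g (($) v) x"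
proof -
  have mult: "(gate_mat n g *\<^sub>v v) $ x = (\<Sum>y<2 ^ n. gate_mat n g $$ (x, y) * v $ y)"
    using x v by (cases g) (auto simp: scalar_prod_def atLeast0LessThan intro!: sum.cong)
  show ?thesis
  proof (cases g)
    case (SQ U i)
    let ?N = "{y. y < 2 ^ n \<and> (\<forall>j<n. j \<noteq> i \<longrightarrow> qbit x j = qbit y j)}"
    have "set_qbit x i 0 \<noteq> set_qbit x i 1"
      using qbit_set_qbit[of 0 x i i] qbit_set_qbit[of 1 x i i] by auto
    have "(gate_mat n g *\<^sub>v v) $ x
        = (\<Sum>y<2 ^ n. if (\<forall>j<n. j \<noteq> i \<longrightarrow> qbit x j = qbit y j) then U $$ (qbit x i, qbit y i) * v $ y else 0)"
      unfolding mult using x by (intro sum.cong) (auto simp: SQ)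
    also have "\<dots> = (\<Sum>y\<in>?N. U $$ (qbit x i, qbit y i) * v $ y)"
      by (simp add: sum.inter_filter[symmetric] lessThan_def)
    also have "\<dots> = gate_fun g (($) v) x"
      using \<open>set_qbit x i 0 \<noteq> set_qbit x i 1\<close> x g by (simp add: SQ qbit_neighbours qbit_set_qbit)
    finally show ?thesis .
  next
    case (CNOT c t)
    have entry: "gate_mat n g $$ (x, y) * v $ y = (if y = cnot_perm c t x then v $ y else 0)"
      if "y < 2 ^ n" for y
    proof -
      have "gate_mat n g $$ (x, y) = (if x = cnot_perm c t y then 1 else 0)"
        using that x by (simp add: CNOT cnot_perm_def)
      then show ?thesis
        using g cnot_perm_eq_iff[of c t x y] by (simp add: CNOT)
    qed
    have "(gate_mat n g *\<^sub>v v) $ x = (\<Sum>y<2 ^ n. if y = cnot_perm c t x then v $ y else 0)"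
      unfolding mult by (rule sum.cong) (simp_all add: entry)
    then show ?thesis
      using x g by (simp add: CNOT cnot_perm_less)
  qed
qed

lemma gate_mat_mult_vec:
  "valid_gate n g \<Longrightarrow> v \<in> carrier_vec (2 ^ n) \<Longrightarrow> gate_mat n g *\<^sub>v v = vec (2 ^ n) (gate_fun g (($) v))"
  using gate_mat_carrier[of n g]
  by (intro eq_vecI) (auto simp: gate_mat_mult_vec_index simp del: index_mult_mat_vec)

lemma gate_fun_cong:
  assumes "valid_gate n g" "x < 2 ^ n" "\<And>y. y < 2 ^ n \<Longrightarrow> f y = f' y"
  shows "gate_fun g f x = gate_fun g f' x"
  using assms by (cases g) (auto simp: set_qbit_less cnot_perm_less)

lemma circuit_fun_cong:
  assumes "valid_circuit n gs" "x < 2 ^ n" "\<And>y. y < 2 ^ n \<Longrightarrow> f y = f' y"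
  shows "circuit_fun gs f x = circuit_fun gs f' x"
  using assms
proof (induction gs arbitrary: f f')
  case (Cons g gs)
  have "gate_fun g f y = gate_fun g f' y" if "y < 2 ^ n" for y
    using Cons.prems that by (intro gate_fun_cong[of n]) auto
  then show ?case
    using Cons.IH[of "gate_fun g f" "gate_fun g f'"] Cons.prems by simp
qed simp

lemma circuit_mat_snoc: "circuit_mat n (gs @ [g]) = gate_mat n g * circuit_mat n gs"
  by (simp add: circuit_mat_def)

lemma circuit_mat_carrier: "circuit_mat n gs \<in> carrier_mat (2 ^ n) (2 ^ n)"
  by (induction gs rule: rev_induct) (simp_all add: circuit_mat_def mult_carrier_mat[OF gate_mat_carrier])

lemma circuit_mat_mult_vec:
  assumes "valid_circuit n gs" "v \<in> carrier_vec (2 ^ n)"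
  shows "circuit_mat n gs *\<^sub>v v = vec (2 ^ n) (circuit_fun gs (($) v))"
  using assms(1)
proof (induction gs rule: rev_induct)
  case Nil
  then show ?case
    using assms(2) by (auto simp: circuit_mat_def)
next
  case (snoc g gs)
  have "circuit_mat n (gs @ [g]) *\<^sub>v v = gate_mat n g *\<^sub>v (circuit_mat n gs *\<^sub>v v)"
    using assms(2) by (simp add: circuit_mat_snoc assoc_mult_mat_vec[OF gate_mat_carrier circuit_mat_carrier])
  also have "\<dots> = vec (2 ^ n) (gate_fun g (circuit_fun gs (($) v)))"
    using snoc by (auto simp: gate_mat_mult_vec intro!: eq_vecI gate_fun_cong)
  finally show ?case
    by simp
qed

lemma circuit_mat_mult_unit_vec:
  assumes "valid_circuit n gs" "s < 2 ^ n"
  shows "circuit_mat n gs *\<^sub>v unit_vec (2 ^ n) s = vec (2 ^ n) (circuit_fun gs (\<lambda>y. if y = s then 1 else 0))"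
  using assms by (auto simp: circuit_mat_mult_vec intro!: eq_vecI circuit_fun_cong)

lemma cadj_carrier: "A \<in> carrier_mat n m \<Longrightarrow> cadj A \<in> carrier_mat m n"
  by (simp add: cadj_def)

lemma cadj_cadj: "cadj (cadj A) = A"
  by (intro eq_matI) (auto simp: cadj_def)

lemma cadj_mult:
  assumes A: "A \<in> carrier_mat n k" and B: "B \<in> carrier_mat k m"
  shows "cadj (A * B) = cadj B * cadj A"
proof (rule eq_matI)
  fix i j assume "i < dim_row (cadj B * cadj A)" "j < dim_col (cadj B * cadj A)"
  then have "i < m" "j < n"
    using A B by (auto simp: cadj_def)
  then show "cadj (A * B) $$ (i, j) = (cadj B * cadj A) $$ (i, j)"
    using A B by (simp add: cadj_def scalar_prod_def cnj_sum mult.commute)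
qed (use A B in \<open>auto simp: cadj_def\<close>)

lemma unitary_mat_one: "unitary_mat d (1\<^sub>m d)"
  by (auto simp: unitary_mat_def cadj_def intro!: eq_matI)

lemma unitary_mat_mult:
  assumes A: "unitary_mat d A" and B: "unitary_mat d B"
  shows "unitary_mat d (A * B)"
proof -
  have Ad: "A \<in> carrier_mat d d" and Bd: "B \<in> carrier_mat d d"
    using A B by (auto simp: unitary_mat_def)
  have "cadj (A * B) * (A * B) = cadj B * ((cadj A * A) * B)"
    using Ad Bd cadj_carrier[OF Ad] cadj_carrier[OF Bd]
    by (simp add: cadj_mult assoc_mult_mat[of _ d d _ d _ d])
  then show ?thesis
    using A B Bd by (simp add: unitary_mat_def mult_carrier_mat[OF Ad Bd])
qed

lemma unitary_mat_cadj:
  assumes U: "unitary_mat d U"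
  shows "unitary_mat d (cadj U)"
proof -
  have Ud: "U \<in> carrier_mat d d"
    using U by (simp add: unitary_mat_def)
  have "U * cadj U = 1\<^sub>m d"
    using U by (intro mat_mult_left_right_inverse[OF cadj_carrier[OF Ud] Ud]) (simp add: unitary_mat_def)
  then show ?thesis
    using Ud by (simp add: unitary_mat_def cadj_cadj cadj_carrier)
qed

lemma mult_mat_2_index:
  "A \<in> carrier_mat 2 2 \<Longrightarrow> B \<in> carrier_mat 2 2 \<Longrightarrow> a < 2 \<Longrightarrow> b < 2 \<Longrightarrow>
    (A * B) $$ (a, b) = A $$ (a, 0) * B $$ (0, b) + A $$ (a, 1) * B $$ (1, b)"
  by (simp add: scalar_prod_def numeral_2_eq_2)

lemma eq_mat_on_unit_vecsI:
  fixes A B :: "'a :: semiring_1 mat"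
  assumes "A \<in> carrier_mat n n" "B \<in> carrier_mat n n"
    and "\<And>j. j < n \<Longrightarrow> A *\<^sub>v unit_vec n j = B *\<^sub>v unit_vec n j"
  shows "A = B"
proof (rule eq_matI)
  have entry: "(C *\<^sub>v unit_vec n j) $ i = C $$ (i, j)"
    if "C \<in> carrier_mat n n" "i < n" "j < n" for C :: "'a mat" and i j
    using that by simp
  fix i j assume "i < dim_row B" "j < dim_col B"
  then show "A $$ (i, j) = B $$ (i, j)"
    using assms entry[of A i j] entry[of B i j] by (metis carrier_matD)
qed (use assms in auto)

fun adj_gate :: "gate \<Rightarrow> gate" where
  "adj_gate (SQ U i) = SQ (cadj U) i"
| "adj_gate (CNOT c t) = CNOT c t"

lemma valid_adj_gate: "valid_gate n g \<Longrightarrow> valid_gate n (adj_gate g)"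
  by (cases g) (auto simp: unitary_mat_cadj)

lemma cadj_gate_mat:
  assumes "valid_gate n g"
  shows "cadj (gate_mat n g) = gate_mat n (adj_gate g)"
proof (rule eq_matI)
  fix x y assume "x < dim_row (gate_mat n (adj_gate g))" "y < dim_col (gate_mat n (adj_gate g))"
  then have xy: "x < 2 ^ n" "y < 2 ^ n"
    by (cases g, simp_all)+
  show "cadj (gate_mat n g) $$ (x, y) = gate_mat n (adj_gate g) $$ (x, y)"
  proof (cases g)
    case (SQ U i)
    then show ?thesis
      using xy assms qbit_less_2[of x i] qbit_less_2[of y i]
      by (auto simp: cadj_def unitary_mat_def)
  next
    case (CNOT c t)
    have "cadj (gate_mat n g) $$ (x, y) = (if y = cnot_perm c t x then 1 else 0)"
      using xy by (simp add: CNOT cadj_def cnot_perm_def)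
    also have "\<dots> = gate_mat n (adj_gate g) $$ (x, y)"
      using xy assms cnot_perm_eq_iff[of c t x y] by (simp add: CNOT cnot_perm_def)
    finally show ?thesis .
  qed
qed (cases g, simp_all add: cadj_def)+

lemma gate_fun_adj_gate:
  assumes "valid_gate n g"
  shows "gate_fun (adj_gate g) (gate_fun g f) = f"
proof (rule ext)
  fix x
  show "gate_fun (adj_gate g) (gate_fun g f) x = f x"
  proof (cases g)
    case (SQ U i)
    define a where "a = qbit x i"
    have a: "a < 2"
      unfolding a_def by (rule qbit_less_2)
    have U: "U \<in> carrier_mat 2 2" "cadj U * U = 1\<^sub>m 2"
      using assms SQ by (auto simp: unitary_mat_def)
    have UU: "(cadj U * U) $$ (a, b) = cadj U $$ (a, 0) * U $$ (0, b) + cadj U $$ (a, 1) * U $$ (1, b)"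
      if "b < 2" for b
      using mult_mat_2_index[OF cadj_carrier[OF U(1)] U(1) a that] .
    have "gate_fun (adj_gate g) (gate_fun g f) x
        = (cadj U * U) $$ (a, 0) * f (set_qbit x i 0) + (cadj U * U) $$ (a, 1) * f (set_qbit x i 1)"
      by (simp add: SQ UU a_def[symmetric] qbit_set_qbit set_qbit_set_qbit algebra_simps)
    also have "\<dots> = f (set_qbit x i a)"
      using a U(2) by (auto simp: less_2_cases_iff)
    finally show ?thesis
      by (simp add: a_def set_qbit_self)
  next
    case (CNOT c t)
    then show ?thesis
      using assms by (simp add: cnot_perm_cnot_perm)
  qed
qed

lemma gate_mat_unitary:
  assumes g: "valid_gate n g"
  shows "unitary_mat (2 ^ n) (gate_mat n g)"
proof -
  have prod: "circuit_mat n [g, adj_gate g] = gate_mat n (adj_gate g) * gate_mat n g"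
    by (simp add: circuit_mat_def right_mult_one_mat[OF gate_mat_carrier])
  have "circuit_mat n [g, adj_gate g] = 1\<^sub>m (2 ^ n)"
  proof (rule eq_mat_on_unit_vecsI[OF circuit_mat_carrier one_carrier_mat])
    fix y :: nat assume "y < 2 ^ n"
    then have "circuit_mat n [g, adj_gate g] *\<^sub>v unit_vec (2 ^ n) y
        = vec (2 ^ n) (circuit_fun [g, adj_gate g] (\<lambda>z. if z = y then 1 else 0))"
      using g by (intro circuit_mat_mult_unit_vec) (simp_all add: valid_adj_gate)
    then show "circuit_mat n [g, adj_gate g] *\<^sub>v unit_vec (2 ^ n) y = 1\<^sub>m (2 ^ n) *\<^sub>v unit_vec (2 ^ n) y"
      using g by (simp add: gate_fun_adj_gate unit_vec_def)
  qed
  then show ?thesis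
    using g by (simp add: unitary_mat_def gate_mat_carrier cadj_gate_mat flip: prod)
qed

lemma circuit_mat_unitary: "valid_circuit n gs \<Longrightarrow> unitary_mat (2 ^ n) (circuit_mat n gs)"
proof (induction gs rule: rev_induct)
  case Nil
  then show ?case
    by (simp add: circuit_mat_def unitary_mat_one)
next
  case (snoc g gs)
  then show ?case
    by (simp add: circuit_mat_snoc unitary_mat_mult gate_mat_unitary)
qed

lemma circuit_mat_Cons: "circuit_mat n (g # gs) = circuit_mat n gs * gate_mat n g"
proof (induction gs rule: rev_induct)
  case Nil
  then show ?case
    by (simp add: circuit_mat_def right_mult_one_mat[OF gate_mat_carrier] left_mult_one_mat[OF gate_mat_carrier])
next
  case (snoc h gs)
  then show ?case
    using circuit_mat_snoc[of n "g # gs" h] circuit_mat_snoc[of n gs h]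
    by (simp add: assoc_mult_mat[OF gate_mat_carrier circuit_mat_carrier gate_mat_carrier])
qed

lemma cadj_circuit_mat:
  "valid_circuit n gs \<Longrightarrow> cadj (circuit_mat n gs) = circuit_mat n (rev (map adj_gate gs))"
proof (induction gs rule: rev_induct)
  case Nil
  then show ?case
    by (auto simp: circuit_mat_def cadj_def intro!: eq_matI)
next
  case (snoc g gs)
  then show ?case
    by (simp add: circuit_mat_snoc circuit_mat_Cons cadj_gate_mat
        cadj_mult[OF gate_mat_carrier circuit_mat_carrier])
qed

section \<open>Running a circuit on a larger register\<close>

definition lift_fun :: "nat \<Rightarrow> nat \<Rightarrow> (nat \<Rightarrow> complex) \<Rightarrow> nat \<Rightarrow> complex" where
  "lift_fun m a w y = (if y div 2 ^ m = a then w (y mod 2 ^ m) else 0)"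

lemma gate_fun_lift_fun: "valid_gate m g \<Longrightarrow> gate_fun g (lift_fun m a w) = lift_fun m a (gate_fun g w)"
  by (cases g) (auto simp: lift_fun_def set_qbit_div set_qbit_mod qbit_mod cnot_perm_div cnot_perm_mod)

lemma circuit_fun_lift_fun:
  "valid_circuit m gs \<Longrightarrow> circuit_fun gs (lift_fun m a w) = lift_fun m a (circuit_fun gs w)"
  by (induction gs arbitrary: w) (simp_all add: gate_fun_lift_fun)

lemma valid_gate_mono: "valid_gate m g \<Longrightarrow> m \<le> n \<Longrightarrow> valid_gate n g"
  by (cases g) auto

lemma valid_circuit_mono: "valid_circuit m gs \<Longrightarrow> m \<le> n \<Longrightarrow> valid_circuit n gs"
  by (auto simp: valid_circuit_def valid_gate_mono)

lemma circuit_mat_index: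
  assumes "valid_circuit n gs" "i < 2 ^ n" "s < 2 ^ n"
  shows "circuit_mat n gs $$ (i, s) = circuit_fun gs (\<lambda>y. if y = s then 1 else 0) i"
proof -
  have "circuit_mat n gs $$ (i, s) = (circuit_mat n gs *\<^sub>v unit_vec (2 ^ n) s) $ i"
    using assms circuit_mat_carrier[of n gs] by simp
  then show ?thesis
    using assms by (simp add: circuit_mat_mult_unit_vec)
qed

lemma circuit_mat_mult_unit_vec_extended:
  assumes gs: "valid_circuit m gs" and s: "s < 2 ^ m" and a: "a < 2 ^ k"
  shows "circuit_mat (m + k) gs *\<^sub>v unit_vec (2 ^ (m + k)) (s + 2 ^ m * a)
       = vec (2 ^ (m + k)) (\<lambda>x. if x div 2 ^ m = a then circuit_mat m gs $$ (x mod 2 ^ m, s) else 0)"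
proof -
  have "s + 2 ^ m * a < 2 ^ m * (a + 1)"
    using s by simp
  also have "\<dots> \<le> 2 ^ m * 2 ^ k"
    using a by (intro mult_le_mono2) simp
  also have "\<dots> = 2 ^ (m + k)"
    by (simp add: power_add)
  finally have "s + 2 ^ m * a < 2 ^ (m + k)" .
  moreover have "(\<lambda>y. if y = s + 2 ^ m * a then 1 else 0) = lift_fun m a (\<lambda>y. if y = s then 1 else 0)"
    using s by (auto simp: lift_fun_def intro!: ext)
  ultimately show ?thesis
    using gs s valid_circuit_mono[OF gs, of "m + k"]
    by (auto simp: circuit_mat_mult_unit_vec circuit_fun_lift_fun lift_fun_def circuit_mat_index intro!: eq_vecI)
qed

lemma executes_borrowed_circuit_mat: "valid_circuit m gs \<Longrightarrow> executes_borrowed m k gs (circuit_mat m gs)"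
  by (simp add: executes_borrowed_def valid_circuit_mono circuit_mat_mult_unit_vec_extended)

lemma executes_ancilla_circuit_mat: "valid_circuit m gs \<Longrightarrow> executes_ancilla m k gs (circuit_mat m gs)"
  using circuit_mat_mult_unit_vec_extended[of m gs _ 0 k]
  by (simp add: executes_ancilla_def valid_circuit_mono)

section \<open>Uniformly controlled rotations\<close>

definition rot_coeff :: "real \<Rightarrow> nat \<Rightarrow> nat \<Rightarrow> real" where
  "rot_coeff \<theta> a b = (if a = b then cos \<theta> else if a = 0 then - sin \<theta> else sin \<theta>)"

definition rot_mat :: "real \<Rightarrow> complex mat" where
  "rot_mat \<theta> = mat 2 2 (\<lambda>(a, b). complex_of_real (rot_coeff \<theta> a b))"

lemma rot_coeff_add:
  "a < 2 \<Longrightarrow> c < 2 \<Longrightarrow>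
    rot_coeff \<beta> a 0 * rot_coeff \<alpha> 0 c + rot_coeff \<beta> a 1 * rot_coeff \<alpha> 1 c = rot_coeff (\<alpha> + \<beta>) a c"
  by (auto simp: less_2_cases_iff rot_coeff_def cos_add sin_add algebra_simps)

lemma rot_coeff_flip: "a < 2 \<Longrightarrow> b < 2 \<Longrightarrow> rot_coeff \<theta> (1 - a) (1 - b) = rot_coeff (- \<theta>) a b"
  by (auto simp: less_2_cases_iff rot_coeff_def)

lemma rot_coeff_transpose: "a < 2 \<Longrightarrow> b < 2 \<Longrightarrow> rot_coeff \<theta> b a = rot_coeff (- \<theta>) a b"
  by (auto simp: less_2_cases_iff rot_coeff_def)

lemma rot_mat_unitary: "unitary_mat 2 (rot_mat \<theta>)"
  unfolding unitary_mat_def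
proof
  show R: "rot_mat \<theta> \<in> carrier_mat 2 2"
    by (simp add: rot_mat_def)
  show "cadj (rot_mat \<theta>) * rot_mat \<theta> = 1\<^sub>m 2"
  proof (rule eq_matI)
    fix a c assume "a < dim_row (1\<^sub>m 2 :: complex mat)" "c < dim_col (1\<^sub>m 2 :: complex mat)"
    then have a: "a < 2" and c: "c < 2"
      by auto
    have adj: "cadj (rot_mat \<theta>) $$ (a, b) = complex_of_real (rot_coeff (- \<theta>) a b)" if "b < 2" for b
      using a that rot_coeff_transpose[OF a that, of \<theta>] by (simp add: cadj_def rot_mat_def)
    have "(cadj (rot_mat \<theta>) * rot_mat \<theta>) $$ (a, c)
        = cadj (rot_mat \<theta>) $$ (a, 0) * rot_mat \<theta> $$ (0, c) + cadj (rot_mat \<theta>) $$ (a, 1) * rot_mat \<theta> $$ (1, c)"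
      by (rule mult_mat_2_index[OF cadj_carrier[OF R] R a c])
    also have "\<dots> = complex_of_real (rot_coeff (- \<theta>) a 0 * rot_coeff \<theta> 0 c + rot_coeff (- \<theta>) a 1 * rot_coeff \<theta> 1 c)"
      using c by (simp add: adj, simp add: rot_mat_def)
    also have "\<dots> = complex_of_real (rot_coeff 0 a c)"
      by (subst rot_coeff_add[OF a c]) simp
    also have "\<dots> = 1\<^sub>m 2 $$ (a, c)"
      using a c by (auto simp: less_2_cases_iff rot_coeff_def)
    finally show "(cadj (rot_mat \<theta>) * rot_mat \<theta>) $$ (a, c) = 1\<^sub>m 2 $$ (a, c)" .
  qed (auto simp: cadj_def rot_mat_def)
qed

definition determined_by_qbits :: "nat set \<Rightarrow> (nat \<Rightarrow> 'a) \<Rightarrow> bool" where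
  "determined_by_qbits Q \<Theta> \<longleftrightarrow> (\<forall>x y. (\<forall>j\<in>Q. qbit x j = qbit y j) \<longrightarrow> \<Theta> x = \<Theta> y)"

lemma determined_by_qbits_set_qbit:
  "determined_by_qbits Q \<Theta> \<Longrightarrow> t \<notin> Q \<Longrightarrow> b < 2 \<Longrightarrow> \<Theta> (set_qbit x t b) = \<Theta> x"
  by (auto simp: determined_by_qbits_def qbit_set_qbit)

lemma determined_by_qbits_mono: "determined_by_qbits Q \<Theta> \<Longrightarrow> Q \<subseteq> Q' \<Longrightarrow> determined_by_qbits Q' \<Theta>"
  by (auto simp: determined_by_qbits_def)

lemma determined_by_qbits_cofactors:
  assumes "determined_by_qbits (insert q Q) \<Theta>"
  shows "determined_by_qbits Q (\<lambda>x. F (\<Theta> (set_qbit x q 0)) (\<Theta> (set_qbit x q 1)))"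
  unfolding determined_by_qbits_def
proof (intro allI impI)
  fix x y assume agree: "\<forall>j\<in>Q. qbit x j = qbit y j"
  have "\<Theta> (set_qbit x q b) = \<Theta> (set_qbit y q b)" if "b < 2" for b
  proof -
    have "\<forall>j\<in>insert q Q. qbit (set_qbit x q b) j = qbit (set_qbit y q b) j"
      using agree that by (simp add: qbit_set_qbit)
    then show ?thesis
      using assms unfolding determined_by_qbits_def by blast
  qed
  then show "F (\<Theta> (set_qbit x q 0)) (\<Theta> (set_qbit x q 1)) = F (\<Theta> (set_qbit y q 0)) (\<Theta> (set_qbit y q 1))"
    by simp
qed

text \<open>A rotation of qubit \<open>t\<close> only if \<open>\<Theta>\<close> does not depend on qubit \<open>t\<close>, as all lemmas below assume.\<close>
definition rot_fun :: "nat \<Rightarrow> (nat \<Rightarrow> real) \<Rightarrow> (nat \<Rightarrow> complex) \<Rightarrow> nat \<Rightarrow> complex" where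
  "rot_fun t \<Theta> f x = complex_of_real (rot_coeff (\<Theta> x) (qbit x t) 0) * f (set_qbit x t 0)
                    + complex_of_real (rot_coeff (\<Theta> x) (qbit x t) 1) * f (set_qbit x t 1)"

lemma rot_fun_rot_fun:
  assumes \<alpha>: "determined_by_qbits Q \<alpha>" and \<beta>: "determined_by_qbits Q \<beta>" and t: "t \<notin> Q"
  shows "rot_fun t \<beta> (rot_fun t \<alpha> f) = rot_fun t (\<lambda>x. \<alpha> x + \<beta> x) f"
proof (rule ext)
  fix x
  define a where "a = qbit x t"
  have a: "a < 2"
    unfolding a_def by (rule qbit_less_2)
  have key: "complex_of_real (rot_coeff (\<alpha> x + \<beta> x) a c)
      = complex_of_real (rot_coeff (\<beta> x) a 0) * complex_of_real (rot_coeff (\<alpha> x) 0 c)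
        + complex_of_real (rot_coeff (\<beta> x) a 1) * complex_of_real (rot_coeff (\<alpha> x) 1 c)" if "c < 2" for c
    using rot_coeff_add[OF a that, of "\<beta> x" "\<alpha> x"] by (simp flip: of_real_mult of_real_add)
  show "rot_fun t \<beta> (rot_fun t \<alpha> f) x = rot_fun t (\<lambda>x. \<alpha> x + \<beta> x) f x"
    using determined_by_qbits_set_qbit[OF \<alpha> t] determined_by_qbits_set_qbit[OF \<beta> t]
    by (simp add: rot_fun_def a_def[symmetric] key qbit_set_qbit set_qbit_set_qbit algebra_simps)
qed

lemma rot_fun_cnot_conj:
  assumes \<beta>: "determined_by_qbits Q \<beta>" and t: "t \<notin> Q" and ct: "c \<noteq> t"
  shows "rot_fun t \<beta> (\<lambda>y. f (cnot_perm c t y)) (cnot_perm c t x)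
       = rot_fun t (\<lambda>x. if qbit x c = 1 then - \<beta> x else \<beta> x) f x"
proof (cases "qbit x c = 1")
  case True
  define a where "a = qbit x t"
  have a: "a < 2"
    unfolding a_def by (rule qbit_less_2)
  have \<pi>x: "cnot_perm c t x = set_qbit x t (1 - a)"
    using True by (simp add: cnot_perm_eq_set_qbit a_def)
  have \<pi>b: "cnot_perm c t (set_qbit x t b) = set_qbit x t (1 - b)" if "b < 2" for b
    using True ct that by (simp add: cnot_perm_eq_set_qbit qbit_set_qbit set_qbit_set_qbit)
  have "rot_fun t \<beta> (\<lambda>y. f (cnot_perm c t y)) (cnot_perm c t x)
      = complex_of_real (rot_coeff (\<beta> x) (1 - a) 1) * f (set_qbit x t 0)
        + complex_of_real (rot_coeff (\<beta> x) (1 - a) 0) * f (set_qbit x t 1)"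
    using determined_by_qbits_set_qbit[OF \<beta> t, of "1 - a" x]
    by (simp add: rot_fun_def \<pi>x \<pi>b qbit_set_qbit set_qbit_set_qbit)
  also have "\<dots> = rot_fun t (\<lambda>x. if qbit x c = 1 then - \<beta> x else \<beta> x) f x"
    using rot_coeff_flip[OF a, of 0 "\<beta> x"] rot_coeff_flip[OF a, of 1 "\<beta> x"] True
    by (simp add: rot_fun_def a_def)
  finally show ?thesis .
next
  case False
  have "cnot_perm c t (set_qbit x t b) = set_qbit x t b" if "b < 2" for b
    using False ct that by (simp add: cnot_perm_def qbit_set_qbit)
  moreover have "cnot_perm c t x = x"
    using False by (simp add: cnot_perm_def)
  ultimately show ?thesis
    using False by (simp add: rot_fun_def)
qed

lemma gate_fun_CNOT: "gate_fun (CNOT c t) f = (\<lambda>x. f (cnot_perm c t x))"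
  by (rule ext) simp

text \<open>Mottonen's recursion: conjugating a rotation by a CNOT negates its angle when the control is set,
  so the half-sum \<open>\<alpha>\<close> and half-difference \<open>\<beta>\<close> of the two cofactors of \<open>\<Theta>\<close> recombine to
  \<open>\<alpha> + \<beta>\<close> and \<open>\<alpha> - \<beta>\<close>.\<close>
fun ucrot :: "nat \<Rightarrow> nat list \<Rightarrow> (nat \<Rightarrow> real) \<Rightarrow> gate list" where
  "ucrot t [] \<Theta> = [SQ (rot_mat (\<Theta> 0)) t]"
| "ucrot t (q # qs) \<Theta> =
     ucrot t qs (\<lambda>x. (\<Theta> (set_qbit x q 0) + \<Theta> (set_qbit x q 1)) / 2) @ [CNOT q t] @
     ucrot t qs (\<lambda>x. (\<Theta> (set_qbit x q 0) - \<Theta> (set_qbit x q 1)) / 2) @ [CNOT q t]"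

lemma length_ucrot: "length (ucrot t qs \<Theta>) + 2 = 3 * 2 ^ length qs"
  by (induction qs arbitrary: \<Theta>) auto

lemma valid_ucrot: "t < n \<Longrightarrow> \<forall>q\<in>set qs. q < n \<and> q \<noteq> t \<Longrightarrow> valid_circuit n (ucrot t qs \<Theta>)"
  by (induction qs arbitrary: \<Theta>) (auto simp: valid_circuit_def rot_mat_unitary)

lemma circuit_fun_ucrot:
  "determined_by_qbits (set qs) \<Theta> \<Longrightarrow> t \<notin> set qs \<Longrightarrow> circuit_fun (ucrot t qs \<Theta>) f = rot_fun t \<Theta> f"
proof (induction qs arbitrary: \<Theta> f)
  case Nil
  show ?case
  proof (rule ext)
    fix x
    have "\<Theta> x = \<Theta> 0"
      using Nil.prems(1) by (simp add: determined_by_qbits_def)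
    then show "circuit_fun (ucrot t [] \<Theta>) f x = rot_fun t \<Theta> f x"
      by (simp add: rot_fun_def rot_mat_def qbit_less_2)
  qed
next
  case (Cons q qs)
  define \<alpha> where "\<alpha> = (\<lambda>x. (\<Theta> (set_qbit x q 0) + \<Theta> (set_qbit x q 1)) / 2)"
  define \<beta> where "\<beta> = (\<lambda>x. (\<Theta> (set_qbit x q 0) - \<Theta> (set_qbit x q 1)) / 2)"
  define \<beta>' where "\<beta>' = (\<lambda>x. if qbit x q = 1 then - \<beta> x else \<beta> x)"
  have t: "t \<notin> set qs" "q \<noteq> t"
    using Cons.prems(2) by auto
  have \<Theta>q: "determined_by_qbits (insert q (set qs)) \<Theta>"
    using Cons.prems(1) by simp
  have \<alpha>: "determined_by_qbits (set qs) \<alpha>"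
    unfolding \<alpha>_def by (rule determined_by_qbits_cofactors[OF \<Theta>q, where F = "\<lambda>a b. (a + b) / 2"])
  have \<beta>: "determined_by_qbits (set qs) \<beta>"
    unfolding \<beta>_def by (rule determined_by_qbits_cofactors[OF \<Theta>q, where F = "\<lambda>a b. (a - b) / 2"])
  have \<alpha>': "determined_by_qbits (set (q # qs)) \<alpha>"
    using \<alpha> by (rule determined_by_qbits_mono) auto
  have \<beta>': "determined_by_qbits (set (q # qs)) \<beta>'"
    using \<beta> by (auto simp: determined_by_qbits_def \<beta>'_def)
  have \<Theta>: "\<alpha> x + \<beta>' x = \<Theta> x" for x
    using set_qbit_self[of x q] qbit_less_2[of x q]
    by (auto simp: \<alpha>_def \<beta>_def \<beta>'_def less_2_cases_iff field_simps)
  have unfold: "ucrot t (q # qs) \<Theta> = ucrot t qs \<alpha> @ [CNOT q t] @ ucrot t qs \<beta> @ [CNOT q t]"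
    by (simp add: \<alpha>_def \<beta>_def)
  have "circuit_fun (ucrot t (q # qs) \<Theta>) f
      = (\<lambda>x. rot_fun t \<beta> (\<lambda>y. rot_fun t \<alpha> f (cnot_perm q t y)) (cnot_perm q t x))"
    unfolding unfold by (simp del: ucrot.simps add: Cons.IH[OF \<alpha> t(1)] Cons.IH[OF \<beta> t(1)] gate_fun_CNOT)
  also have "\<dots> = rot_fun t \<beta>' (rot_fun t \<alpha> f)"
    using rot_fun_cnot_conj[OF \<beta> t] by (simp add: \<beta>'_def fun_eq_iff)
  also have "\<dots> = rot_fun t \<Theta> f"
    using rot_fun_rot_fun[OF \<alpha>' \<beta>'] Cons.prems(2) by (simp add: \<Theta>)
  finally show ?case .
qed

section \<open>Preparing a real state\<close>

text \<open>Level 0 keeps the sign of the amplitude, so that the last stage of rotations produces the signs.\<close>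
definition block_norm :: "(nat \<Rightarrow> real) \<Rightarrow> nat \<Rightarrow> nat \<Rightarrow> real" where
  "block_norm \<psi> t y = (if t = 0 then \<psi> y else sqrt (\<Sum>j = y * 2 ^ t..<(y + 1) * 2 ^ t. (\<psi> j)\<^sup>2))"

lemma block_norm_squared: "(block_norm \<psi> t y)\<^sup>2 = (\<Sum>j = y * 2 ^ t..<(y + 1) * 2 ^ t. (\<psi> j)\<^sup>2)"
  by (simp add: block_norm_def sum_nonneg)

lemma block_norm_Suc:
  "block_norm \<psi> (Suc t) c = sqrt ((block_norm \<psi> t (2 * c))\<^sup>2 + (block_norm \<psi> t (2 * c + 1))\<^sup>2)"
proof -
  have "(\<Sum>j = c * 2 ^ Suc t..<(c + 1) * 2 ^ Suc t. (\<psi> j)\<^sup>2)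
      = (\<Sum>j = 2 * c * 2 ^ t..<(2 * c + 1) * 2 ^ t. (\<psi> j)\<^sup>2) + (\<Sum>j = (2 * c + 1) * 2 ^ t..<(2 * c + 1 + 1) * 2 ^ t. (\<psi> j)\<^sup>2)"
    by (subst sum.atLeastLessThan_concat) (simp_all add: algebra_simps)
  then show ?thesis
    by (simp add: block_norm_def[of _ "Suc t"] block_norm_squared)
qed

lemma Arg_Complex_polar:
  "sqrt (a\<^sup>2 + b\<^sup>2) * cos (Arg (Complex a b)) = a" "sqrt (a\<^sup>2 + b\<^sup>2) * sin (Arg (Complex a b)) = b"
proof -
  have "rcis (cmod (Complex a b)) (Arg (Complex a b)) = Complex a b"
    by (rule rcis_cmod_Arg)
  from arg_cong[OF this, of Re] arg_cong[OF this, of Im]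
  show "sqrt (a\<^sup>2 + b\<^sup>2) * cos (Arg (Complex a b)) = a" "sqrt (a\<^sup>2 + b\<^sup>2) * sin (Arg (Complex a b)) = b"
    by (simp_all add: cmod_def)
qed

text \<open>The amplitudes after the rotation stages on qubits \<open>m - 1, \<dots>, L\<close>: the norm of each block of
  \<open>2 ^ L\<close> basis states sits on the first state of the block.\<close>
definition partial_state :: "(nat \<Rightarrow> real) \<Rightarrow> nat \<Rightarrow> nat \<Rightarrow> complex" where
  "partial_state \<psi> L x = complex_of_real (if x mod 2 ^ L = 0 then block_norm \<psi> L (x div 2 ^ L) else 0)"

text \<open>Reducing \<open>x\<close> mod \<open>2 ^ m\<close> makes the angle depend only on the control qubits \<open>t + 1, \<dots>, m - 1\<close>.\<close>
definition stage_angle :: "(nat \<Rightarrow> real) \<Rightarrow> nat \<Rightarrow> nat \<Rightarrow> nat \<Rightarrow> real" where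
  "stage_angle \<psi> m t x =
     (let c = x mod 2 ^ m div 2 ^ Suc t in Arg (Complex (block_norm \<psi> t (2 * c)) (block_norm \<psi> t (2 * c + 1))))"

definition prep_stage :: "(nat \<Rightarrow> real) \<Rightarrow> nat \<Rightarrow> nat \<Rightarrow> gate list" where
  "prep_stage \<psi> m t = ucrot t [Suc t..<m] (stage_angle \<psi> m t)"

lemma stage_angle_determined: "determined_by_qbits {Suc t..<m} (stage_angle \<psi> m t)"
  unfolding determined_by_qbits_def
proof (intro allI impI)
  fix x y assume agree: "\<forall>j\<in>{Suc t..<m}. qbit x j = qbit y j"
  have digits: "qbit (z mod 2 ^ m div 2 ^ Suc t) j = (if Suc t + j < m then qbit z (Suc t + j) else 0)"
    for z j
    by (simp only: qbit_div qbit_mod)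
  have "x mod 2 ^ m div 2 ^ Suc t = y mod 2 ^ m div 2 ^ Suc t"
    by (rule qbit_eqI) (simp add: digits agree del: power_Suc)
  then show "stage_angle \<psi> m t x = stage_angle \<psi> m t y"
    by (simp add: stage_angle_def)
qed

lemma valid_prep_stage: "t < m \<Longrightarrow> valid_circuit m (prep_stage \<psi> m t)"
  by (simp add: prep_stage_def valid_ucrot)

lemma length_prep_stage: "length (prep_stage \<psi> m t) + 2 = 3 * 2 ^ (m - Suc t)"
  using length_ucrot[of t "[Suc t..<m]" "stage_angle \<psi> m t"] by (simp add: prep_stage_def)

lemma circuit_fun_prep_stage:
  assumes t: "t < m" and x: "x < 2 ^ m"
  shows "circuit_fun (prep_stage \<psi> m t) (partial_state \<psi> (Suc t)) x = partial_state \<psi> t x"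
proof -
  define c where "c = x div 2 ^ Suc t"
  define a where "a = qbit x t"
  have a: "a < 2"
    unfolding a_def by (rule qbit_less_2)
  have "set_qbit x t 1 mod 2 ^ Suc t \<noteq> 0"
    using mod_eq_0_iff_qbit[of "set_qbit x t 1" "Suc t"] qbit_set_qbit[of 1 x t t] by auto
  moreover have "set_qbit x t 0 mod 2 ^ Suc t = 0 \<longleftrightarrow> x mod 2 ^ t = 0"
    by (simp only: mod_eq_0_iff_qbit) (auto simp: qbit_set_qbit less_Suc_eq)
  moreover have "set_qbit x t 0 div 2 ^ Suc t = c"
    unfolding c_def by (rule set_qbit_div) simp_all
  ultimately have "circuit_fun (prep_stage \<psi> m t) (partial_state \<psi> (Suc t)) x
      = complex_of_real (rot_coeff (stage_angle \<psi> m t x) a 0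
          * (if x mod 2 ^ t = 0 then block_norm \<psi> (Suc t) c else 0))"
    using circuit_fun_ucrot[of "[Suc t..<m]" "stage_angle \<psi> m t" t] stage_angle_determined[of t m \<psi>]
    by (simp add: prep_stage_def rot_fun_def partial_state_def a_def)
  also have "\<dots> = partial_state \<psi> t x"
  proof (cases "x mod 2 ^ t = 0")
    case True
    have "stage_angle \<psi> m t x = Arg (Complex (block_norm \<psi> t (2 * c)) (block_norm \<psi> t (2 * c + 1)))"
      using x by (simp add: stage_angle_def c_def Let_def)
    then have "rot_coeff (stage_angle \<psi> m t x) a 0 * block_norm \<psi> (Suc t) c = block_norm \<psi> t (2 * c + a)"
      using a Arg_Complex_polar by (auto simp: less_2_cases_iff rot_coeff_def block_norm_Suc mult.commute)
    then show ?thesis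
      using True div_eq_qbit[of x t] by (simp add: partial_state_def c_def a_def)
  qed (simp add: partial_state_def)
  finally show ?thesis .
qed

fun prep_stages :: "(nat \<Rightarrow> real) \<Rightarrow> nat \<Rightarrow> nat \<Rightarrow> gate list" where
  "prep_stages \<psi> m 0 = []"
| "prep_stages \<psi> m (Suc k) = prep_stages \<psi> m k @ prep_stage \<psi> m (m - Suc k)"

lemma valid_prep_stages: "k \<le> m \<Longrightarrow> valid_circuit m (prep_stages \<psi> m k)"
  by (induction k) (auto intro: valid_prep_stage)

lemma length_prep_stages: "k \<le> m \<Longrightarrow> length (prep_stages \<psi> m k) + 3 \<le> 3 * 2 ^ k"
proof (induction k)
  case (Suc k)
  then have "m - Suc (m - Suc k) = k"
    by simp
  then show ?case
    using Suc length_prep_stage[of \<psi> m "m - Suc k"] by simp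
qed simp

lemma circuit_fun_prep_stages:
  assumes m: "0 < m" and \<psi>: "(\<Sum>j<2 ^ m. (\<psi> j)\<^sup>2) = 1"
  shows "k \<le> m \<Longrightarrow> x < 2 ^ m \<Longrightarrow>
    circuit_fun (prep_stages \<psi> m k) (\<lambda>y. if y = 0 then 1 else 0) x = partial_state \<psi> (m - k) x"
proof (induction k arbitrary: x)
  case 0
  have "block_norm \<psi> m 0 = 1"
    using m \<psi> by (simp add: block_norm_def atLeast0LessThan)
  then show ?case
    using 0 by (simp add: partial_state_def)
next
  case (Suc k)
  then have t: "m - Suc k < m" and st: "Suc (m - Suc k) = m - k"
    by auto
  have "circuit_fun (prep_stages \<psi> m (Suc k)) (\<lambda>y. if y = 0 then 1 else 0) x
      = circuit_fun (prep_stage \<psi> m (m - Suc k)) (partial_state \<psi> (Suc (m - Suc k))) x"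
    using Suc by (auto simp: st intro: circuit_fun_cong[OF valid_prep_stage[OF t]])
  then show ?case
    using circuit_fun_prep_stage[OF t Suc.prems(2)] by simp
qed

lemma real_state_preparation:
  assumes "0 < m" "(\<Sum>j<2 ^ m. (\<psi> j)\<^sup>2) = 1"
  shows "\<exists>gs. valid_circuit m gs \<and> length gs \<le> 3 * 2 ^ m \<and>
    circuit_mat m gs *\<^sub>v unit_vec (2 ^ m) 0 = vec (2 ^ m) (\<lambda>x. complex_of_real (\<psi> x))"
proof (intro exI conjI)
  show "valid_circuit m (prep_stages \<psi> m m)"
    by (simp add: valid_prep_stages)
  show "length (prep_stages \<psi> m m) \<le> 3 * 2 ^ m"
    using length_prep_stages[of m m \<psi>] by simp
  show "circuit_mat m (prep_stages \<psi> m m) *\<^sub>v unit_vec (2 ^ m) 0 = vec (2 ^ m) (\<lambda>x. complex_of_real (\<psi> x))"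
    using circuit_fun_prep_stages[OF assms order_refl]
    by (auto simp: circuit_mat_mult_unit_vec valid_prep_stages partial_state_def block_norm_def intro!: eq_vecI)
qed

lemma ceillog2_bounds:
  assumes "2 \<le> M"
  shows "0 < ceillog2 M" "M \<le> 2 ^ ceillog2 M" "2 ^ ceillog2 M < 2 * M"
  using assms ceillog2_le_iff[of M "ceillog2 M"] ceillog2_ge_iff[of M 1] ceillog2_ge_iff[of M "ceillog2 M"]
  by auto

lemma padded_vec_of_real:
  "padded_vec m M (\<lambda>l. complex_of_real (\<phi> l)) = vec (2 ^ m) (\<lambda>x. complex_of_real (if x < M then \<phi> x else 0))"
  by (auto simp: padded_vec_def)

lemma sum_padded_squares:
  fixes M N :: nat
  shows "M \<le> N \<Longrightarrow> (\<Sum>j<N. (if j < M then \<phi> j else 0)\<^sup>2) = (\<Sum>j<M. (\<phi> j :: real)\<^sup>2)"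
  by (rule sum.mono_neutral_cong_right) auto

lemma padded_state_circuit:
  fixes \<phi> :: "nat \<Rightarrow> real"
  assumes M: "2 \<le> M" and \<phi>: "(\<Sum>l<M. (\<phi> l)\<^sup>2) = 1"
  shows "\<exists>gs. valid_circuit (ceillog2 M) gs \<and> real (length gs) \<le> 6 * real M \<and>
    circuit_mat (ceillog2 M) gs *\<^sub>v unit_vec (2 ^ ceillog2 M) 0 = padded_vec (ceillog2 M) M (\<lambda>l. complex_of_real (\<phi> l))"
proof -
  have padded: "(\<Sum>j<2 ^ ceillog2 M. (if j < M then \<phi> j else 0)\<^sup>2) = 1"
    using sum_padded_squares[OF ceillog2_bounds(2)[OF M], of \<phi>] \<phi> by simp
  obtain gs where gs: "valid_circuit (ceillog2 M) gs" "length gs \<le> 3 * 2 ^ ceillog2 M"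
    "circuit_mat (ceillog2 M) gs *\<^sub>v unit_vec (2 ^ ceillog2 M) 0 = padded_vec (ceillog2 M) M (\<lambda>l. complex_of_real (\<phi> l))"
    using real_state_preparation[OF ceillog2_bounds(1)[OF M] padded] unfolding padded_vec_of_real by blast
  moreover have "length gs \<le> 6 * M"
    using gs(2) ceillog2_bounds(3)[OF M] by linarith
  then have "real (length gs) \<le> 6 * real M"
    using of_nat_mono by fastforce
  ultimately show ?thesis
    by blast
qed

lemma padded_state_prep:
  fixes \<phi> :: "nat \<Rightarrow> real"
  assumes M: "2 \<le> M" and \<phi>: "(\<Sum>l<M. (\<phi> l)\<^sup>2) = 1" and B: "6 * real M \<le> B"
  shows "\<exists>U gs. unitary_mat (2 ^ ceillog2 M) U \<and>
    U *\<^sub>v unit_vec (2 ^ ceillog2 M) 0 = padded_vec (ceillog2 M) M (\<lambda>l. complex_of_real (\<phi> l)) \<and>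
    executes_borrowed (ceillog2 M) (ceillog2 M) gs U \<and> executes_ancilla (ceillog2 M) 1 gs U \<and>
    real (length gs) \<le> B"
proof -
  obtain gs where gs: "valid_circuit (ceillog2 M) gs" "real (length gs) \<le> 6 * real M"
    "circuit_mat (ceillog2 M) gs *\<^sub>v unit_vec (2 ^ ceillog2 M) 0 = padded_vec (ceillog2 M) M (\<lambda>l. complex_of_real (\<phi> l))"
    using padded_state_circuit[OF M \<phi>] by blast
  then show ?thesis
    using B by (intro exI[of _ "circuit_mat (ceillog2 M) gs"] exI[of _ gs])
      (auto simp: circuit_mat_unitary executes_borrowed_circuit_mat executes_ancilla_circuit_mat)
qed

lemma padded_state_unprep:
  fixes \<phi> :: "nat \<Rightarrow> real"
  assumes M: "2 \<le> M" and \<phi>: "(\<Sum>l<M. (\<phi> l)\<^sup>2) = 1" and B: "6 * real M \<le> B"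
  shows "\<exists>U gs. unitary_mat (2 ^ ceillog2 M) U \<and>
    cadj U *\<^sub>v unit_vec (2 ^ ceillog2 M) 0 = padded_vec (ceillog2 M) M (\<lambda>l. complex_of_real (\<phi> l)) \<and>
    executes_ancilla (ceillog2 M) 1 gs U \<and> real (length gs) \<le> B"
proof -
  obtain gs where gs: "valid_circuit (ceillog2 M) gs" "real (length gs) \<le> 6 * real M"
    "circuit_mat (ceillog2 M) gs *\<^sub>v unit_vec (2 ^ ceillog2 M) 0 = padded_vec (ceillog2 M) M (\<lambda>l. complex_of_real (\<phi> l))"
    using padded_state_circuit[OF M \<phi>] by blast
  define gs' where "gs' = rev (map adj_gate gs)"
  have gs': "valid_circuit (ceillog2 M) gs'" "length gs' = length gs"
    using gs(1) by (auto simp: gs'_def valid_circuit_def valid_adj_gate)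
  have "cadj (circuit_mat (ceillog2 M) gs') = circuit_mat (ceillog2 M) gs"
    using cadj_circuit_mat[OF gs(1)] by (metis cadj_cadj gs'_def)
  then show ?thesis
    using gs gs' B by (intro exI[of _ "circuit_mat (ceillog2 M) gs'"] exI[of _ gs'])
      (auto simp: circuit_mat_unitary executes_ancilla_circuit_mat)
qed

lemma sqrt_abs_normalized:
  fixes h :: "'a \<Rightarrow> real"
  assumes S: "0 < (\<Sum>l\<in>A. \<bar>h l\<bar>)"
  shows "(\<Sum>l\<in>A. (sqrt \<bar>h l\<bar> / sqrt (\<Sum>l\<in>A. \<bar>h l\<bar>))\<^sup>2) = 1"
    and "(\<Sum>l\<in>A. (sgn (h l) * sqrt \<bar>h l\<bar> / sqrt (\<Sum>l\<in>A. \<bar>h l\<bar>))\<^sup>2) = 1"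
proof -
  let ?S = "\<Sum>l\<in>A. \<bar>h l\<bar>"
  have sq: "(sqrt \<bar>h l\<bar> / sqrt ?S)\<^sup>2 = \<bar>h l\<bar> / ?S" "(sgn (h l) * sqrt \<bar>h l\<bar> / sqrt ?S)\<^sup>2 = \<bar>h l\<bar> / ?S" for l
    using S by (auto simp: power_divide power_mult_distrib sgn_if)
  have "(\<Sum>l\<in>A. \<bar>h l\<bar> / ?S) = 1"
    using S by (simp add: sum_divide_distrib[symmetric])
  then show "(\<Sum>l\<in>A. (sqrt \<bar>h l\<bar> / sqrt ?S)\<^sup>2) = 1" "(\<Sum>l\<in>A. (sgn (h l) * sqrt \<bar>h l\<bar> / sqrt ?S)\<^sup>2) = 1"
    by (simp_all only: sq)
qed

theorem lemma5:
  "\<exists>c::real. \<forall>(M::nat) (h::nat \<Rightarrow> real).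
     M > 0 \<longrightarrow> even M \<longrightarrow> wavelet_filter M h \<longrightarrow>
     (let m = nat \<lceil>log 2 (real M)\<rceil>; hs = (\<Sum>l<M. \<bar>h l\<bar>) in
       (\<exists>LINPREP gs. unitary_mat (2 ^ m) LINPREP \<and>
          LINPREP *\<^sub>v unit_vec (2 ^ m) 0 = padded_vec m M (\<lambda>l. complex_of_real (h l)) \<and>
          executes_borrowed m m gs LINPREP \<and>
          real (length gs) \<le> c * real M * log 2 (real M)) \<and>
       (\<exists>PREP gs. unitary_mat (2 ^ m) PREP \<and>
          PREP *\<^sub>v unit_vec (2 ^ m) 0
            = padded_vec m M (\<lambda>l. complex_of_real (sqrt \<bar>h l\<bar> / sqrt hs)) \<and>
          executes_ancilla m 1 gs PREP \<and>
          real (length gs) \<le> c * real M powr (3/2)) \<and>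
       (\<exists>UNPREP gs. unitary_mat (2 ^ m) UNPREP \<and>
          cadj UNPREP *\<^sub>v unit_vec (2 ^ m) 0
            = padded_vec m M (\<lambda>l. complex_of_real (sgn (h l) * sqrt \<bar>h l\<bar> / sqrt hs)) \<and>
          executes_ancilla m 1 gs UNPREP \<and>
          real (length gs) \<le> c * real M powr (3/2)))"
  apply (intro exI[of _ 6] allI impI)
  subgoal premises wavelet for M h
  proof -
    have M: "2 \<le> M" and h: "(\<Sum>l<M. (h l)\<^sup>2) = 1" "(\<Sum>l<M. h l) = sqrt 2"
      using wavelet by (auto simp: wavelet_filter_def dest: dvd_imp_le)
    have "0 < (\<Sum>l<M. \<bar>h l\<bar>)"
      using h(2) sum_abs[of h "{..<M}"] by (smt (verit) real_sqrt_gt_zero)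
    note normalized = sqrt_abs_normalized[OF this]
    have bounds: "6 * real M \<le> 6 * real M * log 2 (real M)" "6 * real M \<le> 6 * real M powr (3/2)"
      using M powr_mono[of 1 "3/2" "real M"] by auto
    have m: "nat \<lceil>log 2 (real M)\<rceil> = ceillog2 M"
      using M by (simp add: ceillog2_def)
    show ?thesis
      using padded_state_prep[OF M h(1) bounds(1)] padded_state_prep[OF M normalized(1) bounds(2)]
        padded_state_unprep[OF M normalized(2) bounds(2)]
      unfolding Let_def m by blast
  qed
  done

end
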